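(* Let $L$ be a pretransitive logic, $k\le\omega$, and let $\mathfrak F=(W,(R_i)_{i<n})$ be the $k$-canonical frame of $L$. If $x\in W$ and $\varphi$ is a $k$-formula with $\varphi\in x$, then the set $R^*_{\mathfrak F}(x)\cap\{y\in W\mid \varphi\in y\}$ has a maximal element.
   Context: Logics are normal $n$-modal logics (sets of formulas over $p_0,p_1,\dots$, $\to,\bot$, $\Diamond_i$ ($i<n$), containing tautologies, $\Diamond_i(p\vee q)\to\Diamond_ip\vee\Diamond_iq$, $\neg\Diamond_i\bot$, closed under modus ponens, substitution and monotonicity). A $k$-formula uses only variables $p_j$, $j<k$. With $\Diamond^0\varphi=\varphi$, $\Diamond^{i+1}\varphi=\Diamond^i(\bigvee_{j<n}\Diamond_j\varphi)$, $\Diamond^{\le m}\varphi=\bigvee_{i\le m}\Diamond^i\varphi$, a logic is pretransitive if it contains $\Diamond^{m+1}p\to\Diamond^{\le m}p$ for some $m$. For a consistent logic $L$, the $k$-canonical frame has as points the maximal $L$-consistent sets of $k$-formulas, with $xR_iy$ iff $\Diamond_i\psi\in x$ for every $k$-formula $\psi\in y$. For a frame, $R_{\mathfrak F}=\bigcup_{i<n}R_i$, $R^*_{\mathfrak F}$ is its reflexive transitive closure, and $R^*_{\mathfrak F}(x)=\{y\mid xR^*_{\mathfrak F}y\}$. An element $x$ of a subset $V\subseteq W$ is a maximal element of $V$ if for all $y\in V$, $xR^*_{\mathfrak F}y$ implies $yR^*_{\mathfrak F}x$. *)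

theory Defs
  imports Main "HOL-Library.Extended_Nat"
begin

datatype fm = Var nat | Bot | Imp fm fm | Dia nat fm

definition Neg :: "fm \<Rightarrow> fm" where "Neg a = Imp a Bot"
definition Top :: fm where "Top = Imp Bot Bot"
definition Or :: "fm \<Rightarrow> fm \<Rightarrow> fm" where "Or a b = Imp (Neg a) b"
definition And :: "fm \<Rightarrow> fm \<Rightarrow> fm" where "And a b = Neg (Imp a (Neg b))"

fun Disj :: "fm list \<Rightarrow> fm" where
  "Disj [] = Bot"
| "Disj (a # as) = Or a (Disj as)"

fun Conj :: "fm list \<Rightarrow> fm" where
  "Conj [] = Top"
| "Conj (a # as) = And a (Conj as)"

fun vars :: "fm \<Rightarrow> nat set" where
  "vars (Var j) = {j}"
| "vars Bot = {}"
| "vars (Imp a b) = vars a \<union> vars b"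
| "vars (Dia i a) = vars a"

fun mods :: "fm \<Rightarrow> nat set" where
  "mods (Var j) = {}"
| "mods Bot = {}"
| "mods (Imp a b) = mods a \<union> mods b"
| "mods (Dia i a) = insert i (mods a)"

definition nfm :: "nat \<Rightarrow> fm \<Rightarrow> bool" where
  "nfm n a \<longleftrightarrow> (\<forall>i\<in>mods a. i < n)"

definition kfm :: "nat \<Rightarrow> enat \<Rightarrow> fm \<Rightarrow> bool" where
  "kfm n k a \<longleftrightarrow> nfm n a \<and> (\<forall>j\<in>vars a. enat j < k)"

fun subst :: "(nat \<Rightarrow> fm) \<Rightarrow> fm \<Rightarrow> fm" where
  "subst s (Var j) = s j"
| "subst s Bot = Bot"
| "subst s (Imp a b) = Imp (subst s a) (subst s b)"
| "subst s (Dia i a) = Dia i (subst s a)"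

fun peval :: "(nat \<Rightarrow> bool) \<Rightarrow> fm \<Rightarrow> bool" where
  "peval v (Var j) = v j"
| "peval v Bot = False"
| "peval v (Imp a b) = (peval v a \<longrightarrow> peval v b)"
| "peval v (Dia i a) = False"

definition tautology :: "fm \<Rightarrow> bool" where
  "tautology a \<longleftrightarrow> mods a = {} \<and> (\<forall>v. peval v a)"

definition normal_logic :: "nat \<Rightarrow> fm set \<Rightarrow> bool" where
  "normal_logic n L \<longleftrightarrow>
     (\<forall>a\<in>L. nfm n a)
   \<and> (\<forall>a. tautology a \<longrightarrow> a \<in> L)
   \<and> (\<forall>i<n. Imp (Dia i (Or (Var 0) (Var 1))) (Or (Dia i (Var 0)) (Dia i (Var 1))) \<in> L)
   \<and> (\<forall>i<n. Neg (Dia i Bot) \<in> L)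
   \<and> (\<forall>a b. a \<in> L \<longrightarrow> Imp a b \<in> L \<longrightarrow> b \<in> L)
   \<and> (\<forall>s a. (\<forall>j. nfm n (s j)) \<longrightarrow> a \<in> L \<longrightarrow> subst s a \<in> L)
   \<and> (\<forall>i<n. \<forall>a b. Imp a b \<in> L \<longrightarrow> Imp (Dia i a) (Dia i b) \<in> L)"

definition consistent_logic :: "fm set \<Rightarrow> bool" where
  "consistent_logic L \<longleftrightarrow> Bot \<notin> L"

fun diam_pow :: "nat \<Rightarrow> nat \<Rightarrow> fm \<Rightarrow> fm" where
  "diam_pow n 0 a = a"
| "diam_pow n (Suc i) a = diam_pow n i (Disj (map (\<lambda>j. Dia j a) [0..<n]))"

definition diam_le :: "nat \<Rightarrow> nat \<Rightarrow> fm \<Rightarrow> fm" where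
  "diam_le n m a = Disj (map (\<lambda>i. diam_pow n i a) [0..<Suc m])"

definition pretransitive :: "nat \<Rightarrow> fm set \<Rightarrow> bool" where
  "pretransitive n L \<longleftrightarrow>
     (\<exists>m. Imp (diam_pow n (Suc m) (Var 0)) (diam_le n m (Var 0)) \<in> L)"

definition L_consistent :: "fm set \<Rightarrow> fm set \<Rightarrow> bool" where
  "L_consistent L X \<longleftrightarrow> (\<forall>as. set as \<subseteq> X \<longrightarrow> Neg (Conj as) \<notin> L)"

definition max_cons :: "nat \<Rightarrow> fm set \<Rightarrow> enat \<Rightarrow> fm set \<Rightarrow> bool" where
  "max_cons n L k X \<longleftrightarrow>
     X \<subseteq> {a. kfm n k a} \<and> L_consistent L X
   \<and> (\<forall>Y. X \<subseteq> Y \<longrightarrow> Y \<subseteq> {a. kfm n k a} \<longrightarrow> L_consistent L Y \<longrightarrow> Y = X)"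

definition can_W :: "nat \<Rightarrow> fm set \<Rightarrow> enat \<Rightarrow> fm set set" where
  "can_W n L k = {X. max_cons n L k X}"

definition can_R :: "nat \<Rightarrow> fm set \<Rightarrow> enat \<Rightarrow> nat \<Rightarrow> fm set \<Rightarrow> fm set \<Rightarrow> bool" where
  "can_R n L k i x y \<longleftrightarrow>
     x \<in> can_W n L k \<and> y \<in> can_W n L k \<and> (\<forall>a. kfm n k a \<longrightarrow> a \<in> y \<longrightarrow> Dia i a \<in> x)"

definition can_Rstar :: "nat \<Rightarrow> fm set \<Rightarrow> enat \<Rightarrow> (fm set \<times> fm set) set" where
  "can_Rstar n L k = {(x, y). \<exists>i<n. can_R n L k i x y}\<^sup>*"

definition max_elem :: "('w \<times> 'w) set \<Rightarrow> 'w set \<Rightarrow> 'w \<Rightarrow> bool" where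
  "max_elem Rs V x \<longleftrightarrow> x \<in> V \<and> (\<forall>y\<in>V. (x, y) \<in> Rs \<longrightarrow> (y, x) \<in> Rs)"

end

theory Submission
  imports Defs "HOL-Library.Countable"
begin

text \<open>
  If L contains \<open>\<Diamond>\<^sup>m\<^sup>+\<^sup>1p \<rightarrow> \<Diamond>\<^sup>\<le>\<^sup>mp\<close>, then in the canonical frame y is \<open>R\<^sup>*\<close>-reachable from c
  exactly when for every \<open>\<psi> \<in> y\<close> some \<open>\<Diamond>\<^sup>l\<psi>\<close> with \<open>l \<le> m\<close> lies in c, so \<open>R\<^sup>*\<close> is the accessibility
  relation of the single box \<open>\<box>\<^sup>\<le>\<^sup>m\<close>. Given a chain C of points above x containing \<open>\<phi>\<close>, a formula
  \<open>\<box>\<^sup>\<le>\<^sup>m\<chi>\<close> true at some member of C persists along the rest of the chain, so \<open>\<phi>\<close> together with all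
  such \<open>\<chi>\<close> is consistent, and every maximal consistent extension is an upper bound of C. Zorn's
  lemma for preorders then gives a maximal element.
\<close>

section \<open>Propositional reasoning\<close>

instance fm :: countable by countable_datatype

fun pval :: "(fm \<Rightarrow> bool) \<Rightarrow> fm \<Rightarrow> bool" where
  "pval V (Var j) = V (Var j)"
| "pval V Bot = False"
| "pval V (Imp a b) = (pval V a \<longrightarrow> pval V b)"
| "pval V (Dia i a) = V (Dia i a)"

text \<open>
  A formula is a substitution instance of its skeleton, which is a tautology whenever the formula
  is \<^const>\<open>pval\<close>-valid; hence normal logics contain all \<^const>\<open>pval\<close>-valid formulas.
\<close>
fun skeleton :: "fm \<Rightarrow> fm" where
  "skeleton (Var j) = Var (to_nat (Var j))"
| "skeleton Bot = Bot"
| "skeleton (Imp a b) = Imp (skeleton a) (skeleton b)"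
| "skeleton (Dia i a) = Var (to_nat (Dia i a))"

lemma mods_skeleton: "mods (skeleton a) = {}"
  by (induction a) auto

lemma peval_skeleton: "peval v (skeleton a) = pval (v \<circ> to_nat) a"
  by (induction a) auto

lemma subst_skeleton:
  "nfm n a \<Longrightarrow> subst (\<lambda>j. if nfm n (from_nat j) then from_nat j else Var j) (skeleton a) = a"
  by (induction a) (auto simp: nfm_def)

lemma nfm_simps [simp]:
  "nfm n (Var j)" "nfm n Bot" "nfm n (Imp a b) \<longleftrightarrow> nfm n a \<and> nfm n b"
  "nfm n (Dia i a) \<longleftrightarrow> i < n \<and> nfm n a"
  by (auto simp: nfm_def)

lemma kfm_simps [simp]:
  "kfm n k Bot" "kfm n k (Imp a b) \<longleftrightarrow> kfm n k a \<and> kfm n k b"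
  "kfm n k (Dia i a) \<longleftrightarrow> i < n \<and> kfm n k a"
  by (auto simp: kfm_def)

lemma kfm_nfm: "kfm n k a \<Longrightarrow> nfm n a"
  by (simp add: kfm_def)

lemma pval_connectives [simp]:
  "pval V (Neg a) \<longleftrightarrow> \<not> pval V a" "pval V Top"
  "pval V (Or a b) \<longleftrightarrow> pval V a \<or> pval V b"
  "pval V (And a b) \<longleftrightarrow> pval V a \<and> pval V b"
  by (auto simp: Neg_def Top_def Or_def And_def)

lemma pval_Conj_Disj [simp]:
  "pval V (Conj as) \<longleftrightarrow> (\<forall>a\<in>set as. pval V a)"
  "pval V (Disj as) \<longleftrightarrow> (\<exists>a\<in>set as. pval V a)"
  by (induction as; simp)+

lemma nfm_connectives [simp]:
  "nfm n (Neg a) \<longleftrightarrow> nfm n a" "nfm n Top"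
  "nfm n (Or a b) \<longleftrightarrow> nfm n a \<and> nfm n b"
  "nfm n (And a b) \<longleftrightarrow> nfm n a \<and> nfm n b"
  by (auto simp: Neg_def Top_def Or_def And_def)

lemma nfm_Conj_Disj [simp]:
  "nfm n (Conj as) \<longleftrightarrow> (\<forall>a\<in>set as. nfm n a)"
  "nfm n (Disj as) \<longleftrightarrow> (\<forall>a\<in>set as. nfm n a)"
  by (induction as; simp)+

lemma kfm_connectives [simp]:
  "kfm n k (Neg a) \<longleftrightarrow> kfm n k a" "kfm n k Top"
  "kfm n k (Or a b) \<longleftrightarrow> kfm n k a \<and> kfm n k b"
  "kfm n k (And a b) \<longleftrightarrow> kfm n k a \<and> kfm n k b"
  by (auto simp: Neg_def Top_def Or_def And_def)

lemma kfm_Conj_Disj [simp]: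
  "kfm n k (Conj as) \<longleftrightarrow> (\<forall>a\<in>set as. kfm n k a)"
  "kfm n k (Disj as) \<longleftrightarrow> (\<forall>a\<in>set as. kfm n k a)"
  by (induction as; simp)+

lemma subst_Disj: "subst s (Disj as) = Disj (map (subst s) as)"
  by (induction as) (auto simp: Or_def Neg_def)

section \<open>Iterated diamonds\<close>

definition Dia_any :: "nat \<Rightarrow> fm \<Rightarrow> fm" where
  "Dia_any n a = Disj (map (\<lambda>j. Dia j a) [0..<n])"

lemma diam_pow_Suc_inner: "diam_pow n (Suc l) a = diam_pow n l (Dia_any n a)"
  by (simp add: Dia_any_def)

lemma diam_pow_Suc_outer: "diam_pow n (Suc l) a = Dia_any n (diam_pow n l a)"
  by (induction l arbitrary: a) (auto simp: Dia_any_def)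

lemma diam_pow_add: "diam_pow n (i + l) a = diam_pow n i (diam_pow n l a)"
  by (induction i) (simp_all only: add_0 add_Suc diam_pow_Suc_outer diam_pow.simps(1))

lemma kfm_Dia_any [simp]: "kfm n k (Dia_any n a) \<longleftrightarrow> n = 0 \<or> kfm n k a"
  by (auto simp: Dia_any_def)

lemma nfm_Dia_any [simp]: "nfm n (Dia_any n a) \<longleftrightarrow> n = 0 \<or> nfm n a"
  by (auto simp: Dia_any_def)

lemma pval_Dia_any [simp]: "pval V (Dia_any n a) \<longleftrightarrow> (\<exists>j<n. V (Dia j a))"
  by (auto simp: Dia_any_def)

lemma kfm_diam_pow: "kfm n k a \<Longrightarrow> kfm n k (diam_pow n l a)"
  by (induction l arbitrary: a) (auto simp: Dia_any_def)

lemma subst_diam_pow: "subst s (diam_pow n l a) = diam_pow n l (subst s a)"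
proof (induction l arbitrary: a)
  case (Suc l)
  have "map (subst s) (map (\<lambda>j. Dia j a) [0..<n]) = map (\<lambda>j. Dia j (subst s a)) [0..<n]"
    by simp
  then show ?case using Suc by (simp add: subst_Disj del: map_map)
qed simp

lemma ex_common_superlist:
  assumes "finite I" and "\<forall>i\<in>I. \<exists>xs. set xs \<subseteq> A \<and> P i xs"
  shows "\<exists>ys. set ys \<subseteq> A \<and> (\<forall>i\<in>I. \<exists>xs. set xs \<subseteq> set ys \<and> P i xs)"
  using assms
proof (induction I rule: finite_induct)
  case empty
  show ?case by (intro exI[of _ "[]"]) simp
next
  case (insert i I)
  then obtain xs ys where xs: "set xs \<subseteq> A" "P i xs"
    and ys: "set ys \<subseteq> A" "\<forall>i\<in>I. \<exists>xs. set xs \<subseteq> set ys \<and> P i xs" by auto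
  have "\<exists>zs. set zs \<subseteq> set (xs @ ys) \<and> P j zs" if "j \<in> insert i I" for j
    using that xs(2) ys(2) by (cases "j = i") (auto, blast)
  then show ?case using xs(1) ys(1) by (intro exI[of _ "xs @ ys"]) auto
qed

lemma chain_eventually_all:
  assumes "trans R" "C \<noteq> {}" and total: "\<forall>a\<in>C. \<forall>b\<in>C. (a, b) \<in> R \<or> (b, a) \<in> R"
    and "finite F" and eventually: "\<forall>x\<in>F. \<exists>c\<in>C. \<forall>c'\<in>C. (c, c') \<in> R \<longrightarrow> P x c'"
  shows "\<exists>c\<in>C. \<forall>c'\<in>C. (c, c') \<in> R \<longrightarrow> (\<forall>x\<in>F. P x c')"
  using \<open>finite F\<close> eventually
proof (induction F rule: finite_induct)
  case empty
  show ?case using \<open>C \<noteq> {}\<close> by blast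
next
  case (insert x F)
  then obtain c1 c2 where c1: "c1 \<in> C" "\<forall>c'\<in>C. (c1, c') \<in> R \<longrightarrow> (\<forall>x\<in>F. P x c')"
    and c2: "c2 \<in> C" "\<forall>c'\<in>C. (c2, c') \<in> R \<longrightarrow> P x c'" by auto
  from total c1(1) c2(1) consider "(c1, c2) \<in> R" | "(c2, c1) \<in> R" by blast
  then show ?case
  proof cases
    case 1
    then show ?thesis using c1 c2 \<open>trans R\<close> by (intro bexI[OF _ c2(1)]) (blast dest: transD)
  next
    case 2
    then show ?thesis using c1 c2 \<open>trans R\<close> by (intro bexI[OF _ c1(1)]) (blast dest: transD)
  qed
qed

text \<open>Apply Zorn's lemma to the down-sets of the elements of V.\<close>
lemma preorder_Zorn_max_elem:
  assumes "refl R" "trans R" "x \<in> V"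
    and upper_bound: "\<And>C. C \<subseteq> V \<Longrightarrow> C \<noteq> {} \<Longrightarrow> \<forall>a\<in>C. \<forall>b\<in>C. (a, b) \<in> R \<or> (b, a) \<in> R \<Longrightarrow>
      \<exists>u\<in>V. \<forall>a\<in>C. (a, u) \<in> R"
  shows "\<exists>z. max_elem R V z"
proof -
  define down where "down z = {w \<in> V. (w, z) \<in> R}" for z
  have down_mono: "down a \<subseteq> down b" if "(a, b) \<in> R" for a b
    using that \<open>trans R\<close> unfolding down_def by (blast dest: transD)
  have in_down: "a \<in> down a" if "a \<in> V" for a
    using that reflD[OF \<open>refl R\<close>] unfolding down_def by blast
  have "\<exists>M\<in>down ` V. \<forall>X\<in>down ` V. M \<subseteq> X \<longrightarrow> X = M"
  proof (rule Zorn_Lemma2, intro ballI)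
    fix \<D> assume \<D>: "\<D> \<in> chains (down ` V)"
    define C where "C = {a \<in> V. down a \<in> \<D>}"
    have "\<exists>u\<in>V. \<forall>a\<in>C. (a, u) \<in> R"
    proof (cases "C = {}")
      case True
      then show ?thesis using \<open>x \<in> V\<close> by blast
    next
      case False
      have "(a, b) \<in> R \<or> (b, a) \<in> R" if "a \<in> C" "b \<in> C" for a b
      proof -
        have "down a \<subseteq> down b \<or> down b \<subseteq> down a"
          using that chainsD[OF \<D>] unfolding C_def by blast
        then show ?thesis using that in_down unfolding C_def down_def by blast
      qed
      then show ?thesis using upper_bound[OF _ False] unfolding C_def by blast
    qed
    then obtain u where u: "u \<in> V" "\<forall>a\<in>C. (a, u) \<in> R" by blast
    show "\<exists>U\<in>down ` V. \<forall>X\<in>\<D>. X \<subseteq> U"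
    proof (intro bexI ballI)
      fix X assume "X \<in> \<D>"
      then obtain a where "a \<in> C" "X = down a" using chainsD2[OF \<D>] unfolding C_def by blast
      then show "X \<subseteq> down u" using u(2) down_mono by blast
    qed (use u(1) in blast)
  qed
  then obtain z where z: "z \<in> V" "\<forall>X\<in>down ` V. down z \<subseteq> X \<longrightarrow> X = down z"
    by blast
  have "max_elem R V z" unfolding max_elem_def
  proof (intro conjI ballI impI)
    fix y assume "y \<in> V" "(z, y) \<in> R"
    then have "down y = down z" using z(2) down_mono by blast
    then have "y \<in> down z" using in_down \<open>y \<in> V\<close> by blast
    then show "(y, z) \<in> R" unfolding down_def by blast
  qed (rule z(1))
  then show ?thesis by blast
qed

locale normal_modal_logic =
  fixes n :: nat and L :: "fm set"
  assumes normal: "normal_logic n L"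
begin

lemma logic_nfm: "a \<in> L \<Longrightarrow> nfm n a"
  using normal unfolding normal_logic_def by blast

lemma logic_mp: "a \<in> L \<Longrightarrow> Imp a b \<in> L \<Longrightarrow> b \<in> L"
  using normal unfolding normal_logic_def by blast

lemma logic_mono_Dia: "i < n \<Longrightarrow> Imp a b \<in> L \<Longrightarrow> Imp (Dia i a) (Dia i b) \<in> L"
  using normal unfolding normal_logic_def by blast

lemma logic_subst: "(\<And>j. nfm n (s j)) \<Longrightarrow> a \<in> L \<Longrightarrow> subst s a \<in> L"
  using normal unfolding normal_logic_def by blast

lemma logic_valid:
  assumes "nfm n a" "\<And>V. pval V a"
  shows "a \<in> L"
proof -
  have "tautology (skeleton a)"
    unfolding tautology_def using assms(2) by (simp add: mods_skeleton peval_skeleton)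
  then have "skeleton a \<in> L"
    using normal unfolding normal_logic_def by blast
  then have "subst (\<lambda>j. if nfm n (from_nat j) then from_nat j else Var j) (skeleton a) \<in> L"
    by (intro logic_subst) auto
  then show ?thesis using subst_skeleton[OF assms(1)] by simp
qed

lemma logic_consequence:
  assumes "set cs \<subseteq> L" "nfm n d" "\<And>V. \<forall>c\<in>set cs. pval V c \<Longrightarrow> pval V d"
  shows "d \<in> L"
  using assms
proof (induction cs arbitrary: d)
  case Nil
  then show ?case by (intro logic_valid) simp_all
next
  case (Cons c cs)
  then have "c \<in> L" and "Imp c d \<in> L"
    by (auto intro!: Cons.IH dest: logic_nfm)
  then show ?case by (rule logic_mp)
qed

lemma logic_consequence1:
  "c \<in> L \<Longrightarrow> nfm n d \<Longrightarrow> (\<And>V. pval V c \<Longrightarrow> pval V d) \<Longrightarrow> d \<in> L"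
  by (rule logic_consequence[of "[c]"]) simp_all

lemma logic_consequence2:
  "c \<in> L \<Longrightarrow> c' \<in> L \<Longrightarrow> nfm n d \<Longrightarrow> (\<And>V. pval V c \<Longrightarrow> pval V c' \<Longrightarrow> pval V d) \<Longrightarrow> d \<in> L"
  by (rule logic_consequence[of "[c, c']"]) simp_all

lemma logic_mono_Dia_any: "Imp a b \<in> L \<Longrightarrow> Imp (Dia_any n a) (Dia_any n b) \<in> L"
  by (rule logic_consequence[of "map (\<lambda>j. Imp (Dia j a) (Dia j b)) [0..<n]"])
    (auto simp: logic_mono_Dia dest: logic_nfm)

lemma logic_mono_diam_pow: "Imp a b \<in> L \<Longrightarrow> Imp (diam_pow n l a) (diam_pow n l b) \<in> L"
  by (induction l arbitrary: a b)
    (simp_all add: diam_pow_Suc_inner logic_mono_Dia_any del: diam_pow.simps(2))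

lemma logic_Conj_sublist: "set as \<subseteq> set bs \<Longrightarrow> \<forall>b\<in>set bs. nfm n b \<Longrightarrow> Imp (Conj bs) (Conj as) \<in> L"
  by (rule logic_valid) auto

lemma logic_imp_Conj:
  assumes "nfm n a" "\<And>b. b \<in> set bs \<Longrightarrow> Imp a b \<in> L"
  shows "Imp a (Conj bs) \<in> L"
  by (rule logic_consequence[of "map (Imp a) bs"]) (use assms assms(2)[THEN logic_nfm] in auto)

lemma logic_Dia_Disj:
  assumes "i < n" "\<forall>a\<in>set as. nfm n a"
  shows "Imp (Dia i (Disj as)) (Disj (map (Dia i) as)) \<in> L"
  using assms(2)
proof (induction as)
  case Nil
  have "Neg (Dia i Bot) \<in> L" using normal assms(1) unfolding normal_logic_def by blast
  then show ?case by (simp add: Neg_def)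
next
  case (Cons a as)
  let ?s = "\<lambda>j. if j = 0 then a else if j = 1 then Disj as else Var j"
  have "Imp (Dia i (Or (Var 0) (Var 1))) (Or (Dia i (Var 0)) (Dia i (Var 1))) \<in> L"
    using normal assms(1) unfolding normal_logic_def by blast
  then have "subst ?s (Imp (Dia i (Or (Var 0) (Var 1))) (Or (Dia i (Var 0)) (Dia i (Var 1)))) \<in> L"
    using Cons.prems by (intro logic_subst) auto
  then have K: "Imp (Dia i (Or a (Disj as))) (Or (Dia i a) (Dia i (Disj as))) \<in> L"
    by (simp add: Or_def Neg_def)
  have IH: "Imp (Dia i (Disj as)) (Disj (map (Dia i) as)) \<in> L" using Cons by simp
  show ?case
    by (rule logic_consequence2[OF K IH]) (use Cons.prems assms(1) in auto)
qed

end

locale canonical_frame = normal_modal_logic +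
  fixes k :: enat
begin

abbreviation W :: "fm set set" where "W \<equiv> can_W n L k"
abbreviation R :: "nat \<Rightarrow> fm set \<Rightarrow> fm set \<Rightarrow> bool" where "R \<equiv> can_R n L k"
abbreviation Rstar :: "(fm set \<times> fm set) set" where "Rstar \<equiv> can_Rstar n L k"

lemma W_kfm: "X \<in> W \<Longrightarrow> a \<in> X \<Longrightarrow> kfm n k a"
  by (auto simp: can_W_def max_cons_def)

lemma W_nfm: "X \<in> W \<Longrightarrow> a \<in> X \<Longrightarrow> nfm n a"
  using W_kfm kfm_nfm by blast

lemma W_consistent: "X \<in> W \<Longrightarrow> L_consistent L X"
  by (auto simp: can_W_def max_cons_def)

lemma W_maximal:
  "X \<in> W \<Longrightarrow> X \<subseteq> Y \<Longrightarrow> Y \<subseteq> {a. kfm n k a} \<Longrightarrow> L_consistent L Y \<Longrightarrow> Y = X"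
  by (auto simp: can_W_def max_cons_def)

lemma W_subset_eq: "X \<in> W \<Longrightarrow> Y \<in> W \<Longrightarrow> X \<subseteq> Y \<Longrightarrow> Y = X"
  using W_maximal W_kfm W_consistent by blast

lemma not_mem_inconsistent:
  assumes "X \<in> W" "b \<notin> X" "kfm n k b"
  obtains bs where "set bs \<subseteq> insert b X" "Neg (Conj bs) \<in> L"
proof -
  have "\<not> L_consistent L (insert b X)"
    using W_maximal[OF assms(1), of "insert b X"] assms W_kfm by blast
  then show ?thesis using that by (auto simp: L_consistent_def)
qed

lemma derivable_mem:
  assumes X: "X \<in> W" and "set as \<subseteq> X" "kfm n k b" "Imp (Conj as) b \<in> L"
  shows "b \<in> X"
proof (rule ccontr)
  assume "b \<notin> X"
  then obtain bs where bs: "set bs \<subseteq> insert b X" "Neg (Conj bs) \<in> L"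
    using not_mem_inconsistent[OF X _ \<open>kfm n k b\<close>] by blast
  let ?cs = "as @ filter (\<lambda>c. c \<noteq> b) bs"
  have "set ?cs \<subseteq> X" using assms(2) bs(1) by auto
  moreover have "Neg (Conj ?cs) \<in> L"
    by (rule logic_consequence2[OF assms(4) bs(2)])
      (use \<open>set ?cs \<subseteq> X\<close> in \<open>auto intro: W_nfm[OF X]\<close>)
  ultimately show False using W_consistent[OF X] by (auto simp: L_consistent_def)
qed

lemma pval_consequence_mem:
  assumes X: "X \<in> W" and "set as \<subseteq> X" "kfm n k b"
    and "\<And>V. \<forall>a\<in>set as. pval V a \<Longrightarrow> pval V b"
  shows "b \<in> X"
  by (rule derivable_mem[OF assms(1-3)], rule logic_valid)
    (use assms in \<open>auto intro: W_nfm[OF X] kfm_nfm\<close>)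

lemma logic_imp_mem: "X \<in> W \<Longrightarrow> a \<in> X \<Longrightarrow> Imp a b \<in> L \<Longrightarrow> kfm n k b \<Longrightarrow> b \<in> X"
  by (rule derivable_mem[of X "[a]"], simp_all, rule logic_consequence1) (auto dest: logic_nfm)

lemma Bot_not_mem:
  assumes "X \<in> W" shows "Bot \<notin> X"
proof
  assume "Bot \<in> X"
  then have "set [Bot] \<subseteq> X" by simp
  moreover have "Neg (Conj [Bot]) \<in> L" by (rule logic_valid) auto
  ultimately show False using W_consistent[OF assms] unfolding L_consistent_def by blast
qed

lemma Neg_mem_iff:
  assumes X: "X \<in> W" and a: "kfm n k a"
  shows "Neg a \<in> X \<longleftrightarrow> a \<notin> X"
proof
  assume "Neg a \<in> X"
  then show "a \<notin> X" using pval_consequence_mem[OF X, of "[a, Neg a]" Bot] Bot_not_mem[OF X] by auto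
next
  assume "a \<notin> X"
  then obtain bs where bs: "set bs \<subseteq> insert a X" "Neg (Conj bs) \<in> L"
    using not_mem_inconsistent[OF X _ a] by blast
  let ?cs = "filter (\<lambda>c. c \<noteq> a) bs"
  show "Neg a \<in> X"
    by (rule derivable_mem[OF X, of ?cs], rule_tac [3] logic_consequence1[OF bs(2)])
      (use bs(1) a in \<open>auto intro: W_nfm[OF X] kfm_nfm\<close>)
qed

lemma Disj_mem_ex:
  assumes X: "X \<in> W" and "\<forall>a\<in>set as. kfm n k a" "Disj as \<in> X"
  shows "\<exists>a\<in>set as. a \<in> X"
proof (rule ccontr)
  assume "\<not> ?thesis"
  then have "set (map Neg as) \<subseteq> X" using Neg_mem_iff[OF X] assms(2) by auto
  then have "Bot \<in> X"
    using assms(3) by (intro pval_consequence_mem[OF X, of "Disj as # map Neg as"]) auto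
  then show False using Bot_not_mem[OF X] by simp
qed

lemma Conj_mem_iff:
  assumes X: "X \<in> W" and "\<forall>a\<in>set as. kfm n k a"
  shows "Conj as \<in> X \<longleftrightarrow> set as \<subseteq> X"
proof
  assume "Conj as \<in> X"
  then show "set as \<subseteq> X" using pval_consequence_mem[OF X, of "[Conj as]"] assms(2) by auto
next
  assume "set as \<subseteq> X"
  then show "Conj as \<in> X" by (rule pval_consequence_mem[OF X]) (use assms(2) in auto)
qed

lemma lindenbaum:
  assumes "\<Gamma> \<subseteq> {a. kfm n k a}" "L_consistent L \<Gamma>"
  shows "\<exists>X\<in>W. \<Gamma> \<subseteq> X"
proof -
  let ?A = "{Y. \<Gamma> \<subseteq> Y \<and> Y \<subseteq> {a. kfm n k a} \<and> L_consistent L Y}"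
  have "\<exists>M\<in>?A. \<forall>X\<in>?A. M \<subseteq> X \<longrightarrow> X = M"
  proof (rule Zorn_Lemma2, intro ballI)
    fix C assume C: "C \<in> chains ?A"
    show "\<exists>U\<in>?A. \<forall>X\<in>C. X \<subseteq> U"
    proof (cases "C = {}")
      case True
      then show ?thesis using assms by blast
    next
      case False
      have "L_consistent L (\<Union>C)"
        unfolding L_consistent_def
      proof (intro allI impI)
        fix as assume "set as \<subseteq> \<Union>C"
        then obtain B where "B \<in> C" "set as \<subseteq> B"
          using finite_subset_Union_chain[OF finite_set _ False] C unfolding chains_alt_def by blast
        then show "Neg (Conj as) \<notin> L" using chainsD2[OF C] unfolding L_consistent_def by blast
      qed
      then have "\<Union>C \<in> ?A" using False chainsD2[OF C] by blast
      then show ?thesis by blast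
    qed
  qed
  then obtain M where "M \<in> ?A" "\<forall>X\<in>?A. M \<subseteq> X \<longrightarrow> X = M" by blast
  then have "M \<in> W" "\<Gamma> \<subseteq> M" unfolding can_W_def max_cons_def by blast+
  then show ?thesis by blast
qed

lemma Rstar_refl: "(a, a) \<in> Rstar"
  unfolding can_Rstar_def by simp

lemma refl_Rstar: "refl Rstar"
  unfolding can_Rstar_def by (rule refl_rtrancl)

lemma trans_Rstar: "trans Rstar"
  unfolding can_Rstar_def by (rule trans_rtrancl)

lemma Rstar_trans: "(a, b) \<in> Rstar \<Longrightarrow> (b, c) \<in> Rstar \<Longrightarrow> (a, c) \<in> Rstar"
  using trans_Rstar by (rule transD)

lemma Rstar_step: "(a, b) \<in> Rstar \<Longrightarrow> j < n \<Longrightarrow> R j b c \<Longrightarrow> (a, c) \<in> Rstar"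
  unfolding can_Rstar_def by (rule rtrancl_into_rtrancl) blast+

section \<open>Existence lemmas\<close>

lemma existence_Dia_consistent:
  assumes u: "u \<in> W" and j: "j < n" and \<Gamma>: "\<Gamma> \<subseteq> {a. kfm n k a}"
    and hyp: "\<And>gs. set gs \<subseteq> \<Gamma> \<Longrightarrow> Dia j (Conj gs) \<in> u"
  shows "L_consistent L (\<Gamma> \<union> {\<chi>. kfm n k \<chi> \<and> Dia j (Neg \<chi>) \<notin> u})"
  unfolding L_consistent_def
proof (intro allI impI notI)
  fix bs assume bs: "set bs \<subseteq> \<Gamma> \<union> {\<chi>. kfm n k \<chi> \<and> Dia j (Neg \<chi>) \<notin> u}" "Neg (Conj bs) \<in> L"
  let ?gs = "filter (\<lambda>b. b \<in> \<Gamma>) bs"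
  let ?hs = "filter (\<lambda>b. b \<notin> \<Gamma>) bs"
  have hs: "\<forall>h\<in>set ?hs. kfm n k h \<and> Dia j (Neg h) \<notin> u" using bs(1) by auto
  have gs_nfm: "\<forall>g\<in>set ?gs. nfm n g" using \<Gamma> kfm_nfm by auto
  have hs_nfm: "\<forall>h\<in>set ?hs. nfm n h" using hs kfm_nfm by blast
  have "Imp (Conj ?gs) (Disj (map Neg ?hs)) \<in> L"
    by (rule logic_consequence1[OF bs(2)]) (use gs_nfm hs_nfm in auto)
  then have imp_Dia: "Imp (Dia j (Conj ?gs)) (Dia j (Disj (map Neg ?hs))) \<in> L"
    by (rule logic_mono_Dia[OF j])
  have distrib: "Imp (Dia j (Disj (map Neg ?hs))) (Disj (map (Dia j) (map Neg ?hs))) \<in> L"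
    by (rule logic_Dia_Disj[OF j]) (use hs_nfm in simp)
  have "Dia j (Conj ?gs) \<in> u" by (rule hyp) auto
  then have "Dia j (Disj (map Neg ?hs)) \<in> u"
    by (rule logic_imp_mem[OF u _ imp_Dia]) (use hs j in simp)
  then have "Disj (map (Dia j) (map Neg ?hs)) \<in> u"
    by (rule logic_imp_mem[OF u _ distrib]) (use hs j in simp)
  then have "\<exists>a\<in>set (map (Dia j) (map Neg ?hs)). a \<in> u"
    by (rule Disj_mem_ex[OF u, rotated]) (use hs j in simp)
  then show False using hs by auto
qed

lemma existence_Dia:
  assumes u: "u \<in> W" and j: "j < n" and \<Gamma>: "\<Gamma> \<subseteq> {a. kfm n k a}"
    and hyp: "\<And>gs. set gs \<subseteq> \<Gamma> \<Longrightarrow> Dia j (Conj gs) \<in> u"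
  shows "\<exists>y\<in>W. \<Gamma> \<subseteq> y \<and> R j u y"
proof -
  obtain y where y: "y \<in> W" "\<Gamma> \<union> {\<chi>. kfm n k \<chi> \<and> Dia j (Neg \<chi>) \<notin> u} \<subseteq> y"
    using lindenbaum[OF _ existence_Dia_consistent[OF assms]] \<Gamma> by blast
  have "Dia j a \<in> u" if "kfm n k a" "a \<in> y" for a
  proof (rule ccontr)
    assume "Dia j a \<notin> u"
    moreover have "Imp (Dia j (Neg (Neg a))) (Dia j a) \<in> L"
      by (rule logic_mono_Dia[OF j], rule logic_valid) (use that kfm_nfm in auto)
    ultimately have "Dia j (Neg (Neg a)) \<notin> u" using logic_imp_mem[OF u] that j by auto
    then have "Neg a \<in> y" using y(2) that by auto
    then show False using Neg_mem_iff[OF y(1)] that by blast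
  qed
  then have "R j u y" using u y(1) unfolding can_R_def by blast
  then show ?thesis using y by blast
qed

text \<open>Finitely many failing conjunctions combine into a single conjunction failing everywhere.\<close>
lemma uniform_index:
  assumes X: "X \<in> W" and "finite I" and \<Gamma>: "\<Gamma> \<subseteq> {a. kfm n k a}"
    and mono: "\<And>i a b. i \<in> I \<Longrightarrow> Imp a b \<in> L \<Longrightarrow> Imp (f i a) (f i b) \<in> L"
    and kfm_f: "\<And>i a. i \<in> I \<Longrightarrow> kfm n k a \<Longrightarrow> kfm n k (f i a)"
    and some: "\<And>gs. set gs \<subseteq> \<Gamma> \<Longrightarrow> \<exists>i\<in>I. f i (Conj gs) \<in> X"
  shows "\<exists>i\<in>I. \<forall>gs. set gs \<subseteq> \<Gamma> \<longrightarrow> f i (Conj gs) \<in> X"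
proof (rule ccontr)
  assume "\<not> ?thesis"
  then obtain G where G: "set G \<subseteq> \<Gamma>"
    and fail: "\<forall>i\<in>I. \<exists>gs. set gs \<subseteq> set G \<and> f i (Conj gs) \<notin> X"
    using ex_common_superlist[OF \<open>finite I\<close>, of \<Gamma> "\<lambda>i gs. f i (Conj gs) \<notin> X"] by blast
  obtain i where i: "i \<in> I" "f i (Conj G) \<in> X" using some[OF G] by blast
  obtain gs where gs: "set gs \<subseteq> set G" "f i (Conj gs) \<notin> X" using fail i(1) by blast
  have "Imp (Conj G) (Conj gs) \<in> L"
    using logic_Conj_sublist gs(1) G \<Gamma> kfm_nfm by blast
  then have "Imp (f i (Conj G)) (f i (Conj gs)) \<in> L" by (rule mono[OF i(1)])
  moreover have "kfm n k (f i (Conj gs))" using gs(1) G \<Gamma> by (intro kfm_f[OF i(1)]) auto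
  ultimately show False using logic_imp_mem[OF X i(2)] gs(2) by blast
qed

lemma diam_pow_Conj_Dia_any:
  assumes c: "c \<in> W" and \<Gamma>: "\<Gamma> \<subseteq> {a. kfm n k a}"
    and hyp: "\<And>gs. set gs \<subseteq> \<Gamma> \<Longrightarrow> diam_pow n (Suc l) (Conj gs) \<in> c"
    and ds: "set ds \<subseteq> {Dia_any n (Conj gs) | gs. set gs \<subseteq> \<Gamma>}"
  shows "diam_pow n l (Conj ds) \<in> c"
proof -
  obtain G where G: "set G \<subseteq> \<Gamma>"
    and cover: "\<forall>d\<in>set ds. \<exists>gs. set gs \<subseteq> set G \<and> d = Dia_any n (Conj gs)"
    using ex_common_superlist[of "set ds" \<Gamma> "\<lambda>d gs. d = Dia_any n (Conj gs)"] ds by blast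
  have G_kfm: "\<forall>g\<in>set G. kfm n k g" using G \<Gamma> by blast
  then have G_nfm: "\<forall>g\<in>set G. nfm n g" using kfm_nfm by blast
  have ds_kfm: "kfm n k d" if "d \<in> set ds" for d
  proof -
    from cover that obtain gs where "set gs \<subseteq> set G" "d = Dia_any n (Conj gs)" by blast
    then show ?thesis using G_kfm by auto
  qed
  have imp: "Imp (Dia_any n (Conj G)) (Conj ds) \<in> L"
  proof (rule logic_imp_Conj)
    fix d assume "d \<in> set ds"
    with cover obtain gs where "set gs \<subseteq> set G" "d = Dia_any n (Conj gs)" by blast
    then show "Imp (Dia_any n (Conj G)) d \<in> L"
      using logic_mono_Dia_any[OF logic_Conj_sublist[OF _ G_nfm]] by simp
  qed (use G_nfm in simp)
  have "diam_pow n l (Dia_any n (Conj G)) \<in> c"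
    using hyp[OF G] by (simp only: diam_pow_Suc_inner)
  moreover have "Imp (diam_pow n l (Dia_any n (Conj G))) (diam_pow n l (Conj ds)) \<in> L"
    using imp by (rule logic_mono_diam_pow)
  moreover have "kfm n k (diam_pow n l (Conj ds))"
    using ds_kfm by (simp add: kfm_diam_pow)
  ultimately show ?thesis by (rule logic_imp_mem[OF c])
qed

lemma existence_diam_pow:
  assumes "c \<in> W" "\<Gamma> \<subseteq> {a. kfm n k a}"
    and "\<And>gs. set gs \<subseteq> \<Gamma> \<Longrightarrow> diam_pow n l (Conj gs) \<in> c"
  shows "\<exists>y\<in>W. \<Gamma> \<subseteq> y \<and> (c, y) \<in> Rstar"
  using assms
proof (induction l arbitrary: \<Gamma>)
  case 0
  have "g \<in> c" if "g \<in> \<Gamma>" for g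
    using "0.prems"(2) "0.prems"(3)[of "[g]"] Conj_mem_iff[OF "0.prems"(1), of "[g]"] that
    by auto
  then have "\<Gamma> \<subseteq> c" by blast
  then show ?case using "0.prems"(1) Rstar_refl by blast
next
  case (Suc l)
  note c = Suc.prems(1) and \<Gamma> = Suc.prems(2)
  let ?\<Delta> = "{Dia_any n (Conj gs) | gs. set gs \<subseteq> \<Gamma>}"
  have "?\<Delta> \<subseteq> {a. kfm n k a}" using \<Gamma> by (auto, blast)
  then obtain u where u: "u \<in> W" "?\<Delta> \<subseteq> u" "(c, u) \<in> Rstar"
    using Suc.IH[OF c _ diam_pow_Conj_Dia_any[OF Suc.prems]] by blast
  have "\<exists>j\<in>{..<n}. Dia j (Conj gs) \<in> u" if gs: "set gs \<subseteq> \<Gamma>" for gs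
  proof -
    have "Disj (map (\<lambda>j. Dia j (Conj gs)) [0..<n]) \<in> u"
      using u(2) gs unfolding Dia_any_def by blast
    moreover have "kfm n k (Conj gs)" using gs \<Gamma> by auto
    ultimately have "\<exists>a\<in>set (map (\<lambda>j. Dia j (Conj gs)) [0..<n]). a \<in> u"
      by (intro Disj_mem_ex[OF u(1)]) auto
    then show ?thesis by auto
  qed
  then have "\<exists>j\<in>{..<n}. \<forall>gs. set gs \<subseteq> \<Gamma> \<longrightarrow> Dia j (Conj gs) \<in> u"
    by (intro uniform_index[OF u(1) finite_lessThan \<Gamma>]) (auto intro: logic_mono_Dia)
  then obtain j where "j < n" "\<forall>gs. set gs \<subseteq> \<Gamma> \<longrightarrow> Dia j (Conj gs) \<in> u"
    by blast
  then obtain y where "y \<in> W" "\<Gamma> \<subseteq> y" "R j u y"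
    using existence_Dia[OF u(1) _ \<Gamma>] by blast
  then show ?case using Rstar_step[OF u(3)] \<open>j < n\<close> by blast
qed

lemma Rstar_diam_pow:
  assumes "(c, y) \<in> Rstar" "\<psi> \<in> y" "kfm n k \<psi>"
  shows "\<exists>l. diam_pow n l \<psi> \<in> c"
  using assms(1) unfolding can_Rstar_def
proof (induction rule: converse_rtrancl_induct)
  case base
  show ?case using assms(2) diam_pow.simps(1) by metis
next
  case (step c u)
  then obtain l i where l: "diam_pow n l \<psi> \<in> u" and i: "i < n" "R i c u" by blast
  have k: "kfm n k (diam_pow n l \<psi>)" using kfm_diam_pow assms(3) .
  have c: "c \<in> W" "Dia i (diam_pow n l \<psi>) \<in> c" using i(2) l k by (simp_all add: can_R_def)
  moreover have "Imp (Dia i (diam_pow n l \<psi>)) (Dia_any n (diam_pow n l \<psi>)) \<in> L"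
    by (rule logic_valid) (use i(1) k kfm_nfm in auto)
  ultimately have "Dia_any n (diam_pow n l \<psi>) \<in> c"
    using logic_imp_mem k by simp
  then have "diam_pow n (Suc l) \<psi> \<in> c" by (simp only: diam_pow_Suc_outer)
  then show ?case by blast
qed

end

section \<open>Pretransitive logics\<close>

locale pretransitive_canonical_frame = canonical_frame +
  fixes m :: nat
  assumes pretransitivity: "Imp (diam_pow n (Suc m) (Var 0)) (diam_le n m (Var 0)) \<in> L"
begin

lemma pretransitivity_instance:
  "nfm n a \<Longrightarrow> Imp (diam_pow n (Suc m) a) (Disj (map (\<lambda>l. diam_pow n l a) [0..<Suc m])) \<in> L"
  using logic_subst[OF _ pretransitivity, of "\<lambda>j. if j = 0 then a else Var j"]
  by (simp add: subst_diam_pow diam_le_def subst_Disj comp_def del: diam_pow.simps upt_Suc)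

lemma diam_pow_bounded:
  assumes c: "c \<in> W" and \<psi>: "kfm n k \<psi>" and "diam_pow n l \<psi> \<in> c"
  shows "\<exists>l'\<le>m. diam_pow n l' \<psi> \<in> c"
  using assms(3)
proof (induction l rule: less_induct)
  case (less l)
  show ?case
  proof (cases "l \<le> m")
    case True
    then show ?thesis using less.prems by blast
  next
    case False
    then obtain r where l: "l = Suc m + r" by (metis add_Suc less_imp_Suc_add not_le)
    let ?t = "diam_pow n r \<psi>"
    have t: "kfm n k ?t" using kfm_diam_pow[OF \<psi>] .
    have "diam_pow n (Suc m) ?t \<in> c" using less.prems by (simp only: l diam_pow_add)
    then have "Disj (map (\<lambda>i. diam_pow n i ?t) [0..<Suc m]) \<in> c"
      by (rule logic_imp_mem[OF c _ pretransitivity_instance])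
        (use t kfm_nfm kfm_diam_pow in \<open>auto simp del: upt_Suc\<close>)
    then have "\<exists>a\<in>set (map (\<lambda>i. diam_pow n i ?t) [0..<Suc m]). a \<in> c"
      by (rule Disj_mem_ex[OF c, rotated]) (use t in \<open>auto simp: kfm_diam_pow\<close>)
    then obtain i where "i < Suc m" "diam_pow n i ?t \<in> c"
      by (auto simp del: upt_Suc)
    then show ?thesis using less.IH[of "i + r"] l by (simp add: diam_pow_add)
  qed
qed

lemma Rstar_iff_diam_pow_le:
  assumes c: "c \<in> W" and y: "y \<in> W"
  shows "(c, y) \<in> Rstar \<longleftrightarrow> (\<forall>\<psi>\<in>y. \<exists>l\<le>m. diam_pow n l \<psi> \<in> c)"
proof
  assume "(c, y) \<in> Rstar"
  then show "\<forall>\<psi>\<in>y. \<exists>l\<le>m. diam_pow n l \<psi> \<in> c"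
    using Rstar_diam_pow diam_pow_bounded[OF c] W_kfm[OF y] by metis
next
  assume bounded: "\<forall>\<psi>\<in>y. \<exists>l\<le>m. diam_pow n l \<psi> \<in> c"
  have "\<exists>l\<in>{..m}. diam_pow n l (Conj gs) \<in> c" if "set gs \<subseteq> y" for gs
  proof -
    have "Conj gs \<in> y" using Conj_mem_iff[OF y] W_kfm[OF y] that by auto
    then show ?thesis using bounded by auto
  qed
  then have "\<exists>l\<in>{..m}. \<forall>gs. set gs \<subseteq> y \<longrightarrow> diam_pow n l (Conj gs) \<in> c"
    by (intro uniform_index[OF c finite_atMost])
      (use W_kfm[OF y] in \<open>auto intro: logic_mono_diam_pow kfm_diam_pow\<close>)
  then obtain l where "\<forall>gs. set gs \<subseteq> y \<longrightarrow> diam_pow n l (Conj gs) \<in> c" by blast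
  moreover have "y \<subseteq> {a. kfm n k a}" using W_kfm[OF y] by blast
  ultimately obtain y' where "y' \<in> W" "y \<subseteq> y'" "(c, y') \<in> Rstar"
    using existence_diam_pow[OF c] by blast
  then show "(c, y) \<in> Rstar" using W_subset_eq[OF y] by blast
qed

lemma Rstar_Neg_persists:
  assumes "c \<in> W" "c' \<in> W" "(c, c') \<in> Rstar" "kfm n k \<psi>" "\<forall>l\<le>m. diam_pow n l \<psi> \<notin> c"
  shows "Neg \<psi> \<in> c'"
  using assms Neg_mem_iff Rstar_iff_diam_pow_le by blast

text \<open>The formulas \<open>\<chi> = \<not>\<psi>\<close> such that \<open>\<box>\<^sup>\<le>\<^sup>m\<chi>\<close> holds at some member of C.\<close>
definition boxed_somewhere :: "fm set set \<Rightarrow> fm set" where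
  "boxed_somewhere C = {Neg \<psi> | \<psi>. kfm n k \<psi> \<and> (\<exists>c\<in>C. \<forall>l\<le>m. diam_pow n l \<psi> \<notin> c)}"

lemma boxed_somewhere_persists:
  assumes "C \<subseteq> W" "\<chi> \<in> boxed_somewhere C"
  shows "\<exists>c\<in>C. \<forall>c'\<in>C. (c, c') \<in> Rstar \<longrightarrow> \<chi> \<in> c'"
proof -
  obtain \<psi> c where "\<chi> = Neg \<psi>" "kfm n k \<psi>" "c \<in> C" "\<forall>l\<le>m. diam_pow n l \<psi> \<notin> c"
    using assms(2) unfolding boxed_somewhere_def by blast
  then show ?thesis using Rstar_Neg_persists assms(1) by blast
qed

lemma chain_boxed_somewhere_consistent:
  assumes C: "C \<subseteq> W" "C \<noteq> {}" and total: "\<forall>a\<in>C. \<forall>b\<in>C. (a, b) \<in> Rstar \<or> (b, a) \<in> Rstar"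
    and \<phi>: "\<forall>c\<in>C. \<phi> \<in> c"
  shows "L_consistent L (insert \<phi> (boxed_somewhere C))"
  unfolding L_consistent_def
proof (intro allI impI)
  fix bs assume "set bs \<subseteq> insert \<phi> (boxed_somewhere C)"
  then have "\<forall>\<chi>\<in>set bs. \<exists>c\<in>C. \<forall>c'\<in>C. (c, c') \<in> Rstar \<longrightarrow> \<chi> \<in> c'"
    using boxed_somewhere_persists[OF C(1)] \<phi> C(2) by blast
  then have "\<exists>c\<in>C. \<forall>c'\<in>C. (c, c') \<in> Rstar \<longrightarrow> (\<forall>\<chi>\<in>set bs. \<chi> \<in> c')"
    by (rule chain_eventually_all[OF trans_Rstar C(2) total finite_set])
  then obtain c where "c \<in> C" "set bs \<subseteq> c" using Rstar_refl by blast
  moreover have "L_consistent L c" using W_consistent C(1) \<open>c \<in> C\<close> by blast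
  ultimately show "Neg (Conj bs) \<notin> L" unfolding L_consistent_def by blast
qed

lemma chain_upper_bound:
  assumes C: "C \<subseteq> W" "C \<noteq> {}" and total: "\<forall>a\<in>C. \<forall>b\<in>C. (a, b) \<in> Rstar \<or> (b, a) \<in> Rstar"
    and \<phi>: "kfm n k \<phi>" "\<forall>c\<in>C. \<phi> \<in> c"
  shows "\<exists>y\<in>W. \<phi> \<in> y \<and> (\<forall>c\<in>C. (c, y) \<in> Rstar)"
proof -
  have "insert \<phi> (boxed_somewhere C) \<subseteq> {a. kfm n k a}"
    using \<phi>(1) unfolding boxed_somewhere_def by auto
  then obtain y where y: "y \<in> W" "insert \<phi> (boxed_somewhere C) \<subseteq> y"
    using lindenbaum chain_boxed_somewhere_consistent[OF C total \<phi>(2)] by blast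
  have "(c, y) \<in> Rstar" if "c \<in> C" for c
    unfolding Rstar_iff_diam_pow_le[OF subsetD[OF C(1) that] y(1)]
  proof (intro ballI)
    fix \<psi> assume \<psi>: "\<psi> \<in> y"
    show "\<exists>l\<le>m. diam_pow n l \<psi> \<in> c"
    proof (rule ccontr)
      assume "\<not> ?thesis"
      then have "Neg \<psi> \<in> y"
        using y(2) that W_kfm[OF y(1) \<psi>] unfolding boxed_somewhere_def by blast
      then show False using Neg_mem_iff[OF y(1) W_kfm[OF y(1) \<psi>]] \<psi> by blast
    qed
  qed
  then show ?thesis using y by blast
qed

end

theorem proposition3p2:
  fixes n :: nat and L :: "fm set" and k :: enat and x :: "fm set" and \<phi> :: fm
  assumes "normal_logic n L" and "consistent_logic L" and "pretransitive n L"
    and "x \<in> can_W n L k" and "kfm n k \<phi>" and "\<phi> \<in> x"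
  shows "\<exists>z. max_elem (can_Rstar n L k)
              ({y. (x, y) \<in> can_Rstar n L k} \<inter> {y \<in> can_W n L k. \<phi> \<in> y}) z"
proof -
  obtain m where "Imp (diam_pow n (Suc m) (Var 0)) (diam_le n m (Var 0)) \<in> L"
    using assms(3) unfolding pretransitive_def by blast
  then interpret pretransitive_canonical_frame n L k m
    using assms(1) by unfold_locales
  show ?thesis
  proof (rule preorder_Zorn_max_elem[OF refl_Rstar trans_Rstar])
    show "x \<in> {y. (x, y) \<in> Rstar} \<inter> {y \<in> W. \<phi> \<in> y}" using assms(4,6) Rstar_refl by blast
  next
    fix C assume C: "C \<subseteq> {y. (x, y) \<in> Rstar} \<inter> {y \<in> W. \<phi> \<in> y}" "C \<noteq> {}"
      and "\<forall>a\<in>C. \<forall>b\<in>C. (a, b) \<in> Rstar \<or> (b, a) \<in> Rstar"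
    then obtain y where "y \<in> W" "\<phi> \<in> y" "\<forall>c\<in>C. (c, y) \<in> Rstar"
      using chain_upper_bound[of C] assms(5) by blast
    moreover have "(x, y) \<in> Rstar" using C \<open>\<forall>c\<in>C. (c, y) \<in> Rstar\<close> Rstar_trans by blast
    ultimately show "\<exists>u\<in>{y. (x, y) \<in> Rstar} \<inter> {y \<in> W. \<phi> \<in> y}. \<forall>a\<in>C. (a, u) \<in> Rstar"
      by blast
  qed
qed

end
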